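(* Let $(p_m)$ and $(q_n)$ belong to $SVA_{reg(\alpha)}$ (for some $\alpha\ge0$), and let $(u_{mn})$ be a double sequence of real numbers that is $(\overline{N},p,q)$ summable to a number $\ell$. If $(u_{mn})$ is slowly decreasing relative to $(P_m)$, slowly decreasing relative to $(Q_n)$, and slowly decreasing relative to $(P_m)$ or relative to $(Q_n)$ in the strong sense, then $(u_{mn})$ is $P$-convergent to $\ell$.
   Context: Weights: $(p_m)_{m\ge0},(q_n)_{n\ge0}$ are sequences of positive reals with $P_m=\sum_{i=0}^m p_i\to\infty$ and $Q_n=\sum_{j=0}^n q_j\to\infty$. $SVA_{reg(\alpha)}$ denotes the set of positive sequences $(p_m)$ whose partial sums have the form $P_m=(m+1)^{\alpha}L(m)$ ($m\ge0$) with a constant $\alpha\ge0$ and a slowly varying function $L$ on $(0,\infty)$, i.e. $L$ positive, measurable, and $L(\lambda t)/L(t)\to1$ as $t\to\infty$ for every $\lambda>0$. The weighted means are $\sigma_{mn}=\frac{1}{P_mQ_n}\sum_{i=0}^m\sum_{j=0}^n p_iq_ju_{ij}$; $(u_{mn})$ is $(\overline{N},p,q)$ summable to $\ell$ if $(\sigma_{mn})$ is $P$-convergent to $\ell$. A double sequence $(a_{mn})$ is $P$-convergent to $\ell$ if for every $\epsilon>0$ there is $n_0$ with $|a_{mn}-\ell|<\epsilon$ whenever $m,n\ge n_0$. For a real double array $(a_{mn})$, $\liminf_{m,n\to\infty}a_{mn}=\lim_{N\to\infty}\inf_{m,n\ge N}a_{mn}$. In the minima below, $i,j$ range over nonnegative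 integers satisfying the constraints. A real double sequence $(u_{mn})$ is: - slowly decreasing relative to $(P_m)$ if $\lim_{\lambda\to1^+}\liminf_{m,n\to\infty}\min_{P_m\le P_i\le\lambda P_m}(u_{in}-u_{mn})\ge0$; - slowly decreasing relative to $(Q_n)$ if $\lim_{\kappa\to1^+}\liminf_{m,n\to\infty}\min_{Q_n\le Q_j\le\kappa Q_n}(u_{mj}-u_{mn})\ge0$; - slowly decreasing relative to $(P_m)$ in the strong sense if $\lim_{\lambda,\kappa\to1^+}\liminf_{m,n\to\infty}\min_{P_m\le P_i\le\lambda P_m,\ Q_n\le Q_j\le\kappa Q_n}(u_{ij}-u_{mj})\ge0$; - slowly decreasing relative to $(Q_n)$ in the strong sense if $\lim_{\lambda,\kappa\to1^+}\liminf_{m,n\to\infty}\min_{P_m\le P_i\le\lambda P_m,\ Q_n\le Q_j\le\kappa Q_n}(u_{ij}-u_{in})\ge0$. *)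

theory Defs
  imports "HOL-Analysis.Analysis"
begin

definition psum :: "(nat \<Rightarrow> real) \<Rightarrow> nat \<Rightarrow> real" where
  "psum p m = (\<Sum>i\<le>m. p i)"

definition slowly_varying :: "(real \<Rightarrow> real) \<Rightarrow> bool" where
  "slowly_varying L \<longleftrightarrow>
     (\<forall>t>0. L t > 0) \<and>
     L \<in> borel_measurable (restrict_space borel {0<..}) \<and>
     (\<forall>lam>0. ((\<lambda>t. L (lam * t) / L t) \<longlongrightarrow> 1) at_top)"

definition SVA_reg :: "real \<Rightarrow> (nat \<Rightarrow> real) \<Rightarrow> bool" where
  "SVA_reg \<alpha> p \<longleftrightarrow> \<alpha> \<ge> 0 \<and> (\<forall>m. p m > 0) \<and>
     (\<exists>L. slowly_varying L \<and> (\<forall>m. psum p m = (real m + 1) powr \<alpha> * L (real m)))"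

definition P_convergent :: "(nat \<Rightarrow> nat \<Rightarrow> real) \<Rightarrow> real \<Rightarrow> bool" where
  "P_convergent a l \<longleftrightarrow>
     (\<forall>\<epsilon>>0. \<exists>n0. \<forall>m n. m \<ge> n0 \<and> n \<ge> n0 \<longrightarrow> \<bar>a m n - l\<bar> < \<epsilon>)"

definition wmean :: "(nat \<Rightarrow> real) \<Rightarrow> (nat \<Rightarrow> real) \<Rightarrow> (nat \<Rightarrow> nat \<Rightarrow> real) \<Rightarrow> nat \<Rightarrow> nat \<Rightarrow> real" where
  "wmean p q u m n = (1 / (psum p m * psum q n)) * (\<Sum>i\<le>m. \<Sum>j\<le>n. p i * q j * u i j)"

definition Nbar_summable :: "(nat \<Rightarrow> real) \<Rightarrow> (nat \<Rightarrow> real) \<Rightarrow> (nat \<Rightarrow> nat \<Rightarrow> real) \<Rightarrow> real \<Rightarrow> bool" where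
  "Nbar_summable p q u l \<longleftrightarrow> P_convergent (wmean p q u) l"

text \<open>liminf_{m,n->oo} a_mn = lim_{N->oo} inf_{m,n>=N} a_mn (extended reals; the inner inf is
  nondecreasing in N, so the limit is the supremum).\<close>
definition dliminf :: "(nat \<Rightarrow> nat \<Rightarrow> ereal) \<Rightarrow> ereal" where
  "dliminf a = (SUP N. INF m\<in>{N..}. INF n\<in>{N..}. a m n)"

definition slow_dec_P :: "(nat \<Rightarrow> real) \<Rightarrow> (nat \<Rightarrow> nat \<Rightarrow> real) \<Rightarrow> bool" where
  "slow_dec_P p u \<longleftrightarrow> (\<exists>L::ereal. L \<ge> 0 \<and>
     ((\<lambda>lam. dliminf (\<lambda>m n. INF i\<in>{i. psum p m \<le> psum p i \<and> psum p i \<le> lam * psum p m}.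
                              ereal (u i n - u m n))) \<longlongrightarrow> L) (at_right 1))"

definition slow_dec_Q :: "(nat \<Rightarrow> real) \<Rightarrow> (nat \<Rightarrow> nat \<Rightarrow> real) \<Rightarrow> bool" where
  "slow_dec_Q q u \<longleftrightarrow> (\<exists>L::ereal. L \<ge> 0 \<and>
     ((\<lambda>kap. dliminf (\<lambda>m n. INF j\<in>{j. psum q n \<le> psum q j \<and> psum q j \<le> kap * psum q n}.
                              ereal (u m j - u m n))) \<longlongrightarrow> L) (at_right 1))"

definition strong_box :: "(nat \<Rightarrow> real) \<Rightarrow> (nat \<Rightarrow> real) \<Rightarrow> real \<Rightarrow> real \<Rightarrow> nat \<Rightarrow> nat \<Rightarrow> (nat \<times> nat) set" where
  "strong_box p q lam kap m n =
     {(i, j). psum p m \<le> psum p i \<and> psum p i \<le> lam * psum p m \<and>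
              psum q n \<le> psum q j \<and> psum q j \<le> kap * psum q n}"

definition slow_dec_P_strong :: "(nat \<Rightarrow> real) \<Rightarrow> (nat \<Rightarrow> real) \<Rightarrow> (nat \<Rightarrow> nat \<Rightarrow> real) \<Rightarrow> bool" where
  "slow_dec_P_strong p q u \<longleftrightarrow> (\<exists>L::ereal. L \<ge> 0 \<and>
     ((\<lambda>(lam, kap). dliminf (\<lambda>m n. INF (i, j)\<in>strong_box p q lam kap m n. ereal (u i j - u m j)))
        \<longlongrightarrow> L) (at_right 1 \<times>\<^sub>F at_right 1))"

definition slow_dec_Q_strong :: "(nat \<Rightarrow> real) \<Rightarrow> (nat \<Rightarrow> real) \<Rightarrow> (nat \<Rightarrow> nat \<Rightarrow> real) \<Rightarrow> bool" where
  "slow_dec_Q_strong p q u \<longleftrightarrow> (\<exists>L::ereal. L \<ge> 0 \<and>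
     ((\<lambda>(lam, kap). dliminf (\<lambda>m n. INF (i, j)\<in>strong_box p q lam kap m n. ereal (u i j - u i n)))
        \<longlongrightarrow> L) (at_right 1 \<times>\<^sub>F at_right 1))"

end

theory Submission
  imports Defs "HOL-Real_Asymp.Real_Asymp"
begin

text \<open>A weighted mean of \<open>u\<close> over a rectangle \<open>(m, a] \<times> (n, c]\<close> is an alternating combination
  of the four means \<open>\<sigma>\<close> at its corners, so it is close to \<open>l\<close> once the corners are large and the
  ratios \<open>P\<^sub>a / P\<^sub>m\<close>, \<open>Q\<^sub>c / Q\<^sub>n\<close> stay in a window \<open>[\<mu>, \<mu>\<^sup>2]\<close> with \<open>\<mu> > 1\<close>. Such
  windows exist above and below every large index because \<open>P\<^sub>m\<^sub>+\<^sub>1 / P\<^sub>m \<rightarrow> 1\<close>, which for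
  \<open>SVA\<close> weights follows from the uniform convergence theorem for slowly varying functions.
  Slow decrease bounds \<open>u\<close> below by \<open>u\<^sub>m\<^sub>n - e\<close> on the rectangle above \<open>(m, n)\<close> and above by
  \<open>u\<^sub>m\<^sub>n + e\<close> on the rectangle below it, which squeezes \<open>u\<^sub>m\<^sub>n\<close> to within \<open>2e\<close> of \<open>l\<close>.\<close>

lemma less_dliminfD:
  assumes "c < dliminf a"
  shows "\<exists>N. \<forall>m\<ge>N. \<forall>n\<ge>N. c < a m n"
proof -
  from assms obtain N where N: "c < (INF m\<in>{N..}. INF n\<in>{N..}. a m n)"
    unfolding dliminf_def by (auto simp: less_SUP_iff)
  have "c < a m n" if "N \<le> m" "N \<le> n" for m n
    using less_INF_D[OF less_INF_D[OF N]] that by auto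
  then show ?thesis by blast
qed

lemma uniform_bound_if_dliminf_tendsto:
  fixes f :: "real \<Rightarrow> nat \<Rightarrow> nat \<Rightarrow> nat \<Rightarrow> real"
  assumes "((\<lambda>t. dliminf (\<lambda>m n. INF i\<in>S t m n. ereal (f t m n i))) \<longlongrightarrow> L) (at_right 1)"
    and "0 \<le> L" and "0 < e"
  shows "\<exists>t>1. \<exists>N. \<forall>m\<ge>N. \<forall>n\<ge>N. \<forall>i\<in>S t m n. - e < f t m n i"
proof -
  have "ereal (- e) < L"
    using assms(2,3) by (simp add: order_less_le_trans[of _ 0] zero_ereal_def)
  then have "\<forall>\<^sub>F t in at_right 1. 1 < t \<and> ereal (- e) < dliminf (\<lambda>m n. INF i\<in>S t m n. ereal (f t m n i))"
    by (intro eventually_conj eventually_at_right_less order_tendstoD(1)[OF assms(1)])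
  then obtain t where "1 < t" and "ereal (- e) < dliminf (\<lambda>m n. INF i\<in>S t m n. ereal (f t m n i))"
    using eventually_happens'[OF trivial_limit_at_right_real] by blast
  then obtain N where N: "\<forall>m\<ge>N. \<forall>n\<ge>N. ereal (- e) < (INF i\<in>S t m n. ereal (f t m n i))"
    using less_dliminfD by blast
  have "- e < f t m n i" if "N \<le> m" "N \<le> n" "i \<in> S t m n" for m n i
    using less_INF_D[OF N[rule_format, OF that(1,2)] that(3)] by simp
  with \<open>1 < t\<close> show ?thesis by blast
qed

lemma slow_dec_P_uniform:
  assumes "slow_dec_P p u" and "0 < e"
  shows "\<exists>lam>1. \<exists>N. \<forall>m\<ge>N. \<forall>n\<ge>N. \<forall>i. psum p m \<le> psum p i \<longrightarrow> psum p i \<le> lam * psum p m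
           \<longrightarrow> u m n - e < u i n"
proof -
  obtain L where "0 \<le> L" and "((\<lambda>lam. dliminf (\<lambda>m n. INF i\<in>{i. psum p m \<le> psum p i \<and> psum p i \<le> lam * psum p m}.
                              ereal (u i n - u m n))) \<longlongrightarrow> L) (at_right 1)"
    using assms(1) unfolding slow_dec_P_def by blast
  from uniform_bound_if_dliminf_tendsto[OF this(2,1) assms(2)] obtain lam N where "1 < lam"
    and H: "\<forall>m\<ge>N. \<forall>n\<ge>N. \<forall>i\<in>{i. psum p m \<le> psum p i \<and> psum p i \<le> lam * psum p m}. - e < u i n - u m n"
    by blast
  have "u m n - e < u i n" if "N \<le> m" "N \<le> n" "psum p m \<le> psum p i" "psum p i \<le> lam * psum p m" for m n i
    using H[rule_format, of m n i] that by simp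
  with \<open>1 < lam\<close> show ?thesis by blast
qed

lemma slow_dec_Q_uniform:
  assumes "slow_dec_Q q u" and "0 < e"
  shows "\<exists>kap>1. \<exists>N. \<forall>m\<ge>N. \<forall>n\<ge>N. \<forall>j. psum q n \<le> psum q j \<longrightarrow> psum q j \<le> kap * psum q n
           \<longrightarrow> u m n - e < u m j"
proof -
  obtain L where "0 \<le> L" and "((\<lambda>kap. dliminf (\<lambda>m n. INF j\<in>{j. psum q n \<le> psum q j \<and> psum q j \<le> kap * psum q n}.
                              ereal (u m j - u m n))) \<longlongrightarrow> L) (at_right 1)"
    using assms(1) unfolding slow_dec_Q_def by blast
  from uniform_bound_if_dliminf_tendsto[OF this(2,1) assms(2)] obtain kap N where "1 < kap"
    and H: "\<forall>m\<ge>N. \<forall>n\<ge>N. \<forall>j\<in>{j. psum q n \<le> psum q j \<and> psum q j \<le> kap * psum q n}. - e < u m j - u m n"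
    by blast
  have "u m n - e < u m j" if "N \<le> m" "N \<le> n" "psum q n \<le> psum q j" "psum q j \<le> kap * psum q n" for m n j
    using H[rule_format, of m n j] that by simp
  with \<open>1 < kap\<close> show ?thesis by blast
qed

lemma psum_pos:
  assumes "\<And>i. 0 < p i"
  shows "0 < psum p m"
  unfolding psum_def using assms by (intro sum_pos) auto

lemma strict_mono_psum:
  assumes "\<And>i. 0 < p i"
  shows "strict_mono (psum p)"
  by (rule strict_monoI_Suc) (simp add: psum_def assms)

definition slowly_decreasing_box :: "(nat \<Rightarrow> real) \<Rightarrow> (nat \<Rightarrow> real) \<Rightarrow> (nat \<Rightarrow> nat \<Rightarrow> real) \<Rightarrow> bool" where
  "slowly_decreasing_box P Q u \<longleftrightarrow> (\<forall>e>0. \<exists>lam>1. \<exists>N. \<forall>m\<ge>N. \<forall>n\<ge>N. \<forall>i j.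
     P m \<le> P i \<longrightarrow> P i \<le> lam * P m \<longrightarrow> Q n \<le> Q j \<longrightarrow> Q j \<le> lam * Q n \<longrightarrow> u m n - e \<le> u i j)"

text \<open>The liminf in \<open>slow_dec_P\<close> and \<open>slow_dec_Q\<close> runs over both indices, so each
  one-dimensional condition is uniform in the other index, and chaining
  \<open>(m, n) \<rightarrow> (i, n) \<rightarrow> (i, j)\<close> controls the whole box.\<close>
lemma slowly_decreasing_box_if_slow_dec:
  assumes "\<And>i. 0 < p i" "\<And>j. 0 < q j" and "slow_dec_P p u" and "slow_dec_Q q u"
  shows "slowly_decreasing_box (psum p) (psum q) u"
  unfolding slowly_decreasing_box_def
proof (intro allI impI)
  fix e :: real
  assume "0 < e"
  then have "0 < e/2" by simp
  then obtain lam N1 where lam: "1 < lam" and N1: "\<forall>m\<ge>N1. \<forall>n\<ge>N1. \<forall>i. psum p m \<le> psum p i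
      \<longrightarrow> psum p i \<le> lam * psum p m \<longrightarrow> u m n - e/2 < u i n"
    using slow_dec_P_uniform[OF assms(3)] by blast
  obtain kap N2 where kap: "1 < kap" and N2: "\<forall>m\<ge>N2. \<forall>n\<ge>N2. \<forall>j. psum q n \<le> psum q j
      \<longrightarrow> psum q j \<le> kap * psum q n \<longrightarrow> u m n - e/2 < u m j"
    using slow_dec_Q_uniform[OF assms(4) \<open>0 < e/2\<close>] by blast
  show "\<exists>lam>1. \<exists>N. \<forall>m\<ge>N. \<forall>n\<ge>N. \<forall>i j. psum p m \<le> psum p i \<longrightarrow> psum p i \<le> lam * psum p m
      \<longrightarrow> psum q n \<le> psum q j \<longrightarrow> psum q j \<le> lam * psum q n \<longrightarrow> u m n - e \<le> u i j"
  proof (intro exI[of _ "min lam kap"] conjI exI[of _ "max N1 N2"] allI impI)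
    show "1 < min lam kap" using lam kap by simp
    fix m n i j
    assume m: "max N1 N2 \<le> m" and n: "max N1 N2 \<le> n"
      and i: "psum p m \<le> psum p i" "psum p i \<le> min lam kap * psum p m"
      and j: "psum q n \<le> psum q j" "psum q j \<le> min lam kap * psum q n"
    have "m \<le> i"
      using i(1) by (simp add: strict_mono_less_eq[OF strict_mono_psum[of p, OF assms(1)]])
    have "min lam kap * psum p m \<le> lam * psum p m" "min lam kap * psum q n \<le> kap * psum q n"
      using psum_pos[of p, OF assms(1)] psum_pos[of q, OF assms(2)] by (simp_all add: mult_right_mono)
    then have "u m n - e/2 < u i n" "u i n - e/2 < u i j"
      using N1[rule_format, of m n i] N2[rule_format, of i n j] m n i j \<open>m \<le> i\<close> by simp_all
    then show "u m n - e \<le> u i j" by simp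
  qed
qed

definition large_increments :: "(real \<Rightarrow> real) \<Rightarrow> real \<Rightarrow> real \<Rightarrow> real set" where
  "large_increments h c x = {v \<in> {0..2}. c \<le> \<bar>h (x + v) - h x\<bar>}"

lemma large_increments_sets:
  assumes "h \<in> borel_measurable borel"
  shows "large_increments h c x \<in> sets borel"
proof -
  have "(\<lambda>v. \<bar>h (x + v) - h x\<bar>) \<in> borel_measurable borel"
    using assms by measurable
  then have "{v \<in> space borel. c \<le> \<bar>h (x + v) - h x\<bar>} \<in> sets borel"
    by measurable
  then have "{v. c \<le> \<bar>h (x + v) - h x\<bar>} \<inter> {0..2} \<in> sets borel"
    by auto
  moreover have "large_increments h c x = {v. c \<le> \<bar>h (x + v) - h x\<bar>} \<inter> {0..2}"
    unfolding large_increments_def by auto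
  ultimately show ?thesis
    by auto
qed

lemma emeasure_large_increments_tendsto_0:
  assumes h: "h \<in> borel_measurable borel"
    and conv: "\<And>v. v \<in> {0..2} \<Longrightarrow> ((\<lambda>x. h (x + v) - h x) \<longlongrightarrow> 0) at_top"
    and z: "filterlim z at_top sequentially" and "0 < c"
  shows "(\<lambda>k. emeasure lborel (large_increments h c (z k))) \<longlonglongrightarrow> 0"
proof -
  define G where "G k = (\<Union>n\<in>{k..}. large_increments h c (z n))" for k
  have G_sets: "G k \<in> sets lborel" for k
    unfolding G_def using large_increments_sets[OF h] by (intro sets.countable_UN) auto
  have "emeasure lborel (G k) \<le> emeasure lborel {0..2::real}" for k
    by (intro emeasure_mono) (auto simp: G_def large_increments_def)
  then have G_finite: "emeasure lborel (G k) \<noteq> \<infinity>" for k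
    using neq_top_trans[of "ennreal 2"] by simp
  have "(\<Inter>k. G k) = {}"
  proof (intro equals0I)
    fix v
    assume v: "v \<in> (\<Inter>k. G k)"
    then have "v \<in> G 0"
      by blast
    then have "v \<in> {0..2}"
      unfolding G_def large_increments_def by blast
    then have "((\<lambda>k. h (z k + v) - h (z k)) \<longlongrightarrow> 0) sequentially"
      using filterlim_compose[OF conv z] by simp
    then have "\<forall>\<^sub>F k in sequentially. \<bar>h (z k + v) - h (z k)\<bar> < c"
      using \<open>0 < c\<close> by (simp add: tendsto_iff dist_real_def)
    then obtain K where K: "\<And>k. K \<le> k \<Longrightarrow> \<bar>h (z k + v) - h (z k)\<bar> < c"
      unfolding eventually_sequentially by blast
    from v have "v \<in> G K"
      by blast
    then obtain n where "K \<le> n" "v \<in> large_increments h c (z n)"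
      unfolding G_def by blast
    with K[of n] show False
      by (simp add: large_increments_def)
  qed
  moreover have "decseq G"
    unfolding G_def by (intro decseq_SucI) (auto simp: atLeast_Suc)
  then have "(\<lambda>k. emeasure lborel (G k)) \<longlonglongrightarrow> emeasure lborel (\<Inter>k. G k)"
    using G_sets G_finite by (intro Lim_emeasure_decseq) auto
  ultimately have G_lim: "(\<lambda>k. emeasure lborel (G k)) \<longlonglongrightarrow> 0"
    by simp
  have "\<forall>\<^sub>F k in sequentially. emeasure lborel (large_increments h c (z k)) \<le> emeasure lborel (G k)"
    using G_sets by (intro always_eventually allI emeasure_mono) (auto simp: G_def)
  from tendsto_sandwich[OF _ this tendsto_const G_lim] show ?thesis
    by simp
qed

lemma emeasure_lborel_translate:
  fixes A :: "real set"
  assumes "A \<in> sets borel"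
  shows "emeasure lborel ((\<lambda>v. v - a) -` A) = emeasure lborel A"
proof -
  have "emeasure (distr lborel borel ((+) (- a))) A = emeasure lborel ((+) (- a) -` A \<inter> space lborel)"
    using assms by (intro emeasure_distr) auto
  also have "(+) (- a) -` A \<inter> space lborel = (\<lambda>v. v - a) -` A"
    by auto
  finally show ?thesis
    by (metis lborel_distr_plus)
qed

text \<open>If the large increments of \<open>h\<close> from \<open>x\<close> and from \<open>x + d\<close> both occupy less than half of
  \<open>[0, 2]\<close>, some \<open>v \<in> [1, 2]\<close> avoids both, and \<open>x + v\<close> links \<open>x\<close> to \<open>x + d\<close> by two small increments.\<close>
lemma abs_increment_less_if_large_increments_small:
  assumes h: "h \<in> borel_measurable borel" and d: "d \<in> {0..1}"
    and small: "emeasure lborel (large_increments h c x) < ennreal (1/2)"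
      "emeasure lborel (large_increments h c (x + d)) < ennreal (1/2)"
  shows "\<bar>h (x + d) - h x\<bar> < 2 * c"
proof (rule ccontr)
  assume far: "\<not> \<bar>h (x + d) - h x\<bar> < 2 * c"
  define Bx where "Bx = large_increments h c x"
  define By where "By = (\<lambda>v. v - d) -` large_increments h c (x + d)"
  have "(\<lambda>v. v - d) \<in> borel_measurable borel"
    by measurable
  from measurable_sets[OF this large_increments_sets[OF h]]
  have sets: "Bx \<in> sets lborel" "By \<in> sets lborel"
    unfolding Bx_def By_def using large_increments_sets[OF h] by auto
  have "{1..2} \<subseteq> Bx \<union> By"
  proof
    fix v :: real
    assume "v \<in> {1..2}"
    then have "v - d \<in> {0..2}" "v \<in> {0..2}"
      using d by auto
    moreover have "x + d + (v - d) = x + v"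
      by simp
    ultimately show "v \<in> Bx \<union> By"
      using far unfolding Bx_def By_def large_increments_def by auto
  qed
  then have "emeasure lborel {1..2::real} \<le> emeasure lborel (Bx \<union> By)"
    using sets by (intro emeasure_mono) auto
  then have "ennreal 1 \<le> emeasure lborel (Bx \<union> By)"
    by simp
  also have "\<dots> \<le> emeasure lborel Bx + emeasure lborel By"
    using sets by (intro emeasure_subadditive) auto
  also have "\<dots> < ennreal (1/2) + ennreal (1/2)"
    using small h unfolding Bx_def By_def
    by (intro add_strict_mono) (simp_all add: emeasure_lborel_translate large_increments_sets)
  also have "\<dots> = ennreal 1"
    by (simp del: ennreal_half flip: ennreal_plus)
  finally show False
    by simp
qed

text \<open>A sequential form of Karamata's uniform convergence theorem.\<close>
lemma tendsto_increment_uniform: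
  fixes h :: "real \<Rightarrow> real" and x d :: "nat \<Rightarrow> real"
  assumes h: "h \<in> borel_measurable borel"
    and conv: "\<And>v. v \<in> {0..2} \<Longrightarrow> ((\<lambda>y. h (y + v) - h y) \<longlongrightarrow> 0) at_top"
    and x: "filterlim x at_top sequentially"
    and d: "\<And>k. d k \<in> {0..1}"
  shows "(\<lambda>k. h (x k + d k) - h (x k)) \<longlonglongrightarrow> 0"
  unfolding tendsto_iff dist_real_def diff_0_right
proof (intro allI impI)
  fix e :: real
  assume "0 < e"
  then have "0 < e / 2"
    by simp
  have "filterlim (\<lambda>k. x k + d k) at_top sequentially"
    using d by (intro filterlim_at_top_mono[OF x]) auto
  then have "\<forall>\<^sub>F k in sequentially. emeasure lborel (large_increments h (e/2) (x k)) < ennreal (1/2)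
      \<and> emeasure lborel (large_increments h (e/2) (x k + d k)) < ennreal (1/2)"
    using emeasure_large_increments_tendsto_0[OF h conv _ \<open>0 < e/2\<close>] x
    by (intro eventually_conj order_tendstoD(2)) (auto simp: ennreal_less_zero_iff simp del: ennreal_half)
  then show "\<forall>\<^sub>F k in sequentially. \<bar>h (x k + d k) - h (x k)\<bar> < e"
  proof eventually_elim
    case (elim k)
    then show ?case
      using abs_increment_less_if_large_increments_small[OF h d[of k], where c="e/2" and x="x k"] by simp
  qed
qed

lemma measurable_ln_comp_exp:
  assumes "slowly_varying L"
  shows "(\<lambda>y. ln (L (exp y))) \<in> borel_measurable borel"
proof -
  have "(exp :: real \<Rightarrow> real) \<in> measurable borel (restrict_space borel {0<..})"
    by (rule measurable_restrict_space2) auto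
  then have "(\<lambda>y. L (exp y)) \<in> borel_measurable borel"
    using assms unfolding slowly_varying_def by (auto intro: measurable_compose)
  then show ?thesis
    by measurable
qed

lemma tendsto_ln_comp_exp_increment:
  assumes "slowly_varying L"
  shows "((\<lambda>y. ln (L (exp (y + v))) - ln (L (exp y))) \<longlongrightarrow> 0) at_top"
proof -
  have L_pos: "\<And>t. 0 < t \<Longrightarrow> 0 < L t"
    and L_lim: "((\<lambda>t. L (exp v * t) / L t) \<longlongrightarrow> 1) at_top"
    using assms unfolding slowly_varying_def by auto
  have "((\<lambda>y. L (exp v * exp y) / L (exp y)) \<longlongrightarrow> 1) at_top"
    using L_lim exp_at_top by (rule filterlim_compose)
  then have "((\<lambda>y. ln (L (exp v * exp y) / L (exp y))) \<longlongrightarrow> ln 1) at_top"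
    by (intro tendsto_ln) auto
  moreover have "ln (L (exp v * exp y) / L (exp y)) = ln (L (exp (y + v))) - ln (L (exp y))" for y
    using L_pos[of "exp y"] L_pos[of "exp v * exp y"] by (simp add: ln_div exp_add mult.commute)
  ultimately show ?thesis
    by simp
qed

text \<open>With \<open>h = ln \<circ> L \<circ> exp\<close>, the ratio \<open>L (k + 2) / L (k + 1)\<close> is an increment of \<open>h\<close>
  over a step \<open>ln ((k + 2) / (k + 1))\<close> that varies with \<open>k\<close>, so pointwise slow variation
  does not suffice.\<close>
lemma slowly_varying_ratio_succ:
  assumes "slowly_varying L"
  shows "(\<lambda>k. L (real k + 1) / L (real k)) \<longlonglongrightarrow> 1"
proof -
  have L_pos: "\<And>t. 0 < t \<Longrightarrow> 0 < L t"
    using assms unfolding slowly_varying_def by auto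
  define h where "h y = ln (L (exp y))" for y
  define x where "x k = ln (real k + 1)" for k :: nat
  define d where "d k = ln (real k + 2) - ln (real k + 1)" for k :: nat
  have x: "filterlim x at_top sequentially"
    unfolding x_def by real_asymp
  have d: "d k \<in> {0..1}" for k
  proof -
    have "ln (real k + 2) - ln (real k + 1) = ln ((real k + 2) / (real k + 1))"
      by (simp add: ln_div)
    also have "\<dots> \<le> (real k + 2) / (real k + 1) - 1"
      by (intro ln_le_minus_one) (simp add: field_simps)
    also have "\<dots> \<le> 1"
      by (simp add: field_simps)
    finally show ?thesis
      unfolding d_def by simp
  qed
  have "(\<lambda>k. h (x k + d k) - h (x k)) \<longlonglongrightarrow> 0"
    unfolding h_def
    by (rule tendsto_increment_uniform[OF measurable_ln_comp_exp[OF assms]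
          tendsto_ln_comp_exp_increment[OF assms] x d])
  then have "(\<lambda>k. exp (h (x k + d k) - h (x k))) \<longlonglongrightarrow> exp 0"
    by (rule tendsto_exp)
  moreover have "exp (h (x k + d k) - h (x k)) = L (real (Suc k) + 1) / L (real (Suc k))" for k
    unfolding h_def x_def d_def using L_pos[of "real k + 2"] L_pos[of "real k + 1"]
    by (simp add: exp_diff add.commute)
  ultimately have "(\<lambda>k. L (real (Suc k) + 1) / L (real (Suc k))) \<longlonglongrightarrow> 1"
    by simp
  then show ?thesis
    by (rule LIMSEQ_imp_Suc)
qed

lemma SVA_reg_ratio_succ:
  assumes "SVA_reg \<alpha> p"
  shows "(\<lambda>m. psum p (Suc m) / psum p m) \<longlonglongrightarrow> 1"
proof -
  obtain L where L: "slowly_varying L" and P: "\<And>m. psum p m = (real m + 1) powr \<alpha> * L (real m)"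
    using assms unfolding SVA_reg_def by blast
  have "(\<lambda>m. (real m + 2) / (real m + 1)) \<longlonglongrightarrow> 1"
    by real_asymp
  then have "(\<lambda>m. ((real m + 2) / (real m + 1)) powr \<alpha>) \<longlonglongrightarrow> 1 powr \<alpha>"
    by (rule tendsto_powr[OF _ tendsto_const]) simp
  then have "(\<lambda>m. ((real m + 2) / (real m + 1)) powr \<alpha> * (L (real m + 1) / L (real m))) \<longlonglongrightarrow> 1 * 1"
    using slowly_varying_ratio_succ[OF L] by (intro tendsto_mult) auto
  moreover have "psum p (Suc m) / psum p m = ((real m + 2) / (real m + 1)) powr \<alpha> * (L (real m + 1) / L (real m))"
    for m
  proof -
    have "real (Suc m) = real m + 1" "real (Suc m) + 1 = real m + 2"
      by simp_all
    then have "psum p (Suc m) = (real m + 2) powr \<alpha> * L (real m + 1)"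
      using P[of "Suc m"] by (simp add: ac_simps)
    then show ?thesis
      using P[of m] by (simp add: powr_divide)
  qed
  ultimately show ?thesis
    by simp
qed

locale regular_growth =
  fixes P :: "nat \<Rightarrow> real"
  assumes pos: "\<And>k. 0 < P k"
    and mono: "mono P"
    and unbounded: "filterlim P at_top sequentially"
    and ratio: "(\<lambda>k. P (Suc k) / P k) \<longlonglongrightarrow> 1"
begin

lemma eventually_step_le:
  assumes "1 < \<mu>"
  shows "\<forall>\<^sub>F k in sequentially. P (Suc k) \<le> \<mu> * P k"
  using order_tendstoD(2)[OF ratio assms]
proof eventually_elim
  case (elim k)
  then show ?case
    using pos[of k] by (simp add: pos_divide_less_eq mult.commute)
qed

lemma exists_index_between:
  assumes step: "\<forall>k\<ge>M. P (Suc k) \<le> \<mu> * P k" and "1 \<le> \<mu>" and "P M \<le> X"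
  shows "\<exists>a\<ge>M. X \<le> P a \<and> P a \<le> \<mu> * X"
proof -
  have "\<forall>\<^sub>F a in sequentially. M \<le> a \<and> X \<le> P a"
    using unbounded by (intro eventually_conj eventually_ge_at_top) (simp add: filterlim_at_top)
  then have ex: "\<exists>a. M \<le> a \<and> X \<le> P a"
    using eventually_happens'[OF trivial_limit_sequentially] by blast
  define a where "a = (LEAST a. M \<le> a \<and> X \<le> P a)"
  have a: "M \<le> a" "X \<le> P a"
    using LeastI_ex[OF ex] unfolding a_def by auto
  have "P a \<le> \<mu> * X"
  proof (cases "a = M")
    case True
    then have "P a = X" "0 \<le> X"
      using \<open>P M \<le> X\<close> a(2) pos[of M] by auto
    then show ?thesis
      using mult_right_mono[OF \<open>1 \<le> \<mu>\<close>] by fastforce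
  next
    case False
    then have "M \<le> a - 1" and a_Suc: "Suc (a - 1) = a"
      using a(1) by auto
    moreover have "\<not> (M \<le> a - 1 \<and> X \<le> P (a - 1))"
      using not_less_Least[of "a - 1" "\<lambda>a. M \<le> a \<and> X \<le> P a"] a_Suc unfolding a_def by simp
    ultimately have "P (a - 1) \<le> X"
      by simp
    then have "\<mu> * P (a - 1) \<le> \<mu> * X"
      using \<open>1 \<le> \<mu>\<close> by simp
    then show ?thesis
      using step \<open>M \<le> a - 1\<close> a_Suc by (metis order_trans)
  qed
  with a show ?thesis
    by blast
qed

lemma eventually_index_above:
  assumes "1 < \<mu>"
  shows "\<forall>\<^sub>F m in sequentially. \<exists>a>m. \<mu> * P m \<le> P a \<and> P a \<le> \<mu>\<^sup>2 * P m"
proof -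
  obtain M where M: "\<forall>k\<ge>M. P (Suc k) \<le> \<mu> * P k"
    using eventually_step_le[OF assms] unfolding eventually_sequentially by blast
  have grow: "P k < \<mu> * P k" for k
    using pos[of k] assms by simp
  have "\<exists>a>m. \<mu> * P m \<le> P a \<and> P a \<le> \<mu>\<^sup>2 * P m" if "M \<le> m" for m
  proof -
    have "P M \<le> \<mu> * P m"
      using monoD[OF mono that] grow[of m] by simp
    then obtain a where a: "\<mu> * P m \<le> P a" "P a \<le> \<mu> * (\<mu> * P m)"
      using exists_index_between[OF M] assms by force
    have "m < a"
    proof (rule ccontr)
      assume "\<not> m < a"
      then have "P a \<le> P m"
        by (intro monoD[OF mono]) simp
      with a(1) grow[of m] show False
        by simp
    qed
    moreover have "P a \<le> \<mu>\<^sup>2 * P m"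
      using a(2) by (simp add: power2_eq_square mult.assoc)
    ultimately show ?thesis
      using a(1) by blast
  qed
  then show ?thesis
    unfolding eventually_sequentially by blast
qed

lemma eventually_index_below:
  assumes "1 < \<mu>"
  shows "\<forall>\<^sub>F m in sequentially. \<exists>a\<ge>N. a < m \<and> \<mu> * P a \<le> P m \<and> P m \<le> \<mu>\<^sup>2 * P a"
proof -
  obtain M where "\<forall>k\<ge>M. P (Suc k) \<le> \<mu> * P k"
    using eventually_step_le[OF assms] unfolding eventually_sequentially by blast
  then have M: "\<forall>k\<ge>max M N. P (Suc k) \<le> \<mu> * P k"
    by simp
  have "\<forall>\<^sub>F m in sequentially. \<mu>\<^sup>2 * P (max M N) \<le> P m"
    using unbounded by (simp add: filterlim_at_top)
  then show ?thesis
  proof eventually_elim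
    case (elim m)
    have "0 < \<mu>\<^sup>2" "1 \<le> \<mu>"
      using assms by simp_all
    then have "P (max M N) \<le> P m / \<mu>\<^sup>2"
      using elim by (simp add: pos_le_divide_eq mult.commute)
    then obtain a where a: "max M N \<le> a" "P m / \<mu>\<^sup>2 \<le> P a" "P a \<le> \<mu> * (P m / \<mu>\<^sup>2)"
      using exists_index_between[OF M \<open>1 \<le> \<mu>\<close>] by blast
    have "\<mu> * P a \<le> P m" "P m \<le> \<mu>\<^sup>2 * P a"
      using a(2,3) assms \<open>0 < \<mu>\<^sup>2\<close> by (simp_all add: field_simps power2_eq_square)
    moreover have "a < m"
    proof (rule ccontr)
      assume "\<not> a < m"
      then have "P m \<le> P a"
        by (intro monoD[OF mono]) simp
      moreover have "P a < \<mu> * P a"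
        using pos[of a] assms by simp
      ultimately show False
        using \<open>\<mu> * P a \<le> P m\<close> by simp
    qed
    ultimately show ?case
      using a(1) by auto
  qed
qed

end

lemma regular_growth_psum:
  assumes "\<And>i. 0 < p i" and "filterlim (psum p) at_top sequentially"
    and "(\<lambda>m. psum p (Suc m) / psum p m) \<longlonglongrightarrow> 1"
  shows "regular_growth (psum p)"
  using assms psum_pos[of p, OF assms(1)] strict_mono_mono[OF strict_mono_psum[of p, OF assms(1)]]
  by unfold_locales auto

definition block_mean ::
    "(nat \<Rightarrow> real) \<Rightarrow> (nat \<Rightarrow> real) \<Rightarrow> (nat \<Rightarrow> nat \<Rightarrow> real) \<Rightarrow> nat \<Rightarrow> nat \<Rightarrow> nat \<Rightarrow> nat \<Rightarrow> real" where
  "block_mean p q u a b c d =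
     (\<Sum>i\<in>{a<..b}. \<Sum>j\<in>{c<..d}. p i * q j * u i j) / ((psum p b - psum p a) * (psum q d - psum q c))"

lemma sum_greaterThanAtMost_eq_diff:
  fixes f :: "nat \<Rightarrow> 'a::ab_group_add"
  assumes "a \<le> b"
  shows "(\<Sum>i\<in>{a<..b}. f i) = (\<Sum>i\<le>b. f i) - (\<Sum>i\<le>a. f i)"
proof -
  have "{..b} = {..a} \<union> {a<..b}" "{..a} \<inter> {a<..b} = {}"
    using assms by auto
  then show ?thesis
    by (simp add: sum.union_disjoint)
qed

lemma psum_diff_eq_sum: "a \<le> b \<Longrightarrow> psum p b - psum p a = (\<Sum>i\<in>{a<..b}. p i)"
  unfolding psum_def by (simp add: sum_greaterThanAtMost_eq_diff)

lemma psum_diff_pos: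
  assumes "\<And>i. 0 < p i" and "a < b"
  shows "0 < psum p b - psum p a"
  using strict_mono_psum[of p, OF assms(1)] assms(2) by (simp add: strict_mono_less)

lemma block_weight_eq:
  assumes "a \<le> b" "c \<le> d"
  shows "(\<Sum>i\<in>{a<..b}. \<Sum>j\<in>{c<..d}. p i * q j) = (psum p b - psum p a) * (psum q d - psum q c)"
  using assms by (simp add: psum_diff_eq_sum sum_product)

lemma block_sum_eq_wmean:
  assumes "\<And>i. 0 < p i" "\<And>j. 0 < q j" "a \<le> b" "c \<le> d"
  shows "(\<Sum>i\<in>{a<..b}. \<Sum>j\<in>{c<..d}. p i * q j * u i j)
    = psum p b * psum q d * wmean p q u b d - psum p a * psum q d * wmean p q u a d
      - psum p b * psum q c * wmean p q u b c + psum p a * psum q c * wmean p q u a c"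
proof -
  have wmean: "psum p x * psum q y * wmean p q u x y = (\<Sum>i\<le>x. \<Sum>j\<le>y. p i * q j * u i j)" for x y
  proof -
    have "psum p x \<noteq> 0" "psum q y \<noteq> 0"
      using psum_pos[of p, OF assms(1)] psum_pos[of q, OF assms(2)] by (metis less_irrefl)+
    then show ?thesis
      by (simp add: wmean_def)
  qed
  have "(\<Sum>i\<in>{a<..b}. \<Sum>j\<in>{c<..d}. p i * q j * u i j)
      = (\<Sum>i\<in>{a<..b}. (\<Sum>j\<le>d. p i * q j * u i j) - (\<Sum>j\<le>c. p i * q j * u i j))"
    using assms(4) by (simp add: sum_greaterThanAtMost_eq_diff)
  also have "\<dots> = (\<Sum>i\<le>b. \<Sum>j\<le>d. p i * q j * u i j) - (\<Sum>i\<le>a. \<Sum>j\<le>d. p i * q j * u i j)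
      - ((\<Sum>i\<le>b. \<Sum>j\<le>c. p i * q j * u i j) - (\<Sum>i\<le>a. \<Sum>j\<le>c. p i * q j * u i j))"
    using assms(3) by (simp add: sum_subtractf sum_greaterThanAtMost_eq_diff)
  finally show ?thesis
    by (simp add: wmean)
qed

lemma block_mean_ge:
  assumes "\<And>i. 0 < p i" "\<And>j. 0 < q j" "a < b" "c < d"
    and "\<And>i j. i \<in> {a<..b} \<Longrightarrow> j \<in> {c<..d} \<Longrightarrow> v \<le> u i j"
  shows "v \<le> block_mean p q u a b c d"
proof -
  define W where "W = (psum p b - psum p a) * (psum q d - psum q c)"
  have "0 < W"
    unfolding W_def using psum_diff_pos[of p, OF assms(1,3)] psum_diff_pos[of q, OF assms(2,4)] by simp
  have "v * W = (\<Sum>i\<in>{a<..b}. \<Sum>j\<in>{c<..d}. p i * q j * v)"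
    unfolding W_def using assms(3,4)
    by (simp add: block_weight_eq[symmetric] sum_distrib_left sum_distrib_right ac_simps)
  also have "\<dots> \<le> (\<Sum>i\<in>{a<..b}. \<Sum>j\<in>{c<..d}. p i * q j * u i j)"
    using assms(1,2,5) by (intro sum_mono mult_left_mono) (auto intro: less_imp_le)
  finally show ?thesis
    using \<open>0 < W\<close> unfolding block_mean_def W_def by (simp add: pos_le_divide_eq)
qed

lemma block_mean_uminus: "block_mean p q (\<lambda>i j. - u i j) a b c d = - block_mean p q u a b c d"
  by (simp add: block_mean_def sum_negf)

lemma block_mean_le:
  assumes "\<And>i. 0 < p i" "\<And>j. 0 < q j" "a < b" "c < d"
    and "\<And>i j. i \<in> {a<..b} \<Longrightarrow> j \<in> {c<..d} \<Longrightarrow> u i j \<le> v"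
  shows "block_mean p q u a b c d \<le> v"
  using block_mean_ge[OF assms(1-4), of "- v" "\<lambda>i j. - u i j"] assms(5)
  by (simp add: block_mean_uminus)

lemma abs_block_mean_diff_le:
  assumes "\<And>i. 0 < p i" "\<And>j. 0 < q j" "a < b" "c < d"
    and "\<And>x y. x \<in> {a, b} \<Longrightarrow> y \<in> {c, d} \<Longrightarrow> \<bar>wmean p q u x y - l\<bar> \<le> \<delta>"
  shows "\<bar>block_mean p q u a b c d - l\<bar>
    \<le> \<delta> * ((psum p b + psum p a) / (psum p b - psum p a)) * ((psum q d + psum q c) / (psum q d - psum q c))"
proof -
  define Pa Pb Qc Qd where "Pa = psum p a" and "Pb = psum p b" and "Qc = psum q c" and "Qd = psum q d"
  have pos: "0 < Pa" "0 < Pb" "0 < Qc" "0 < Qd" "0 < Pb - Pa" "0 < Qd - Qc"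
    unfolding Pa_def Pb_def Qc_def Qd_def
    using psum_pos[of p, OF assms(1)] psum_pos[of q, OF assms(2)]
      psum_diff_pos[of p, OF assms(1,3)] psum_diff_pos[of q, OF assms(2,4)] by simp_all
  have "block_mean p q u a b c d * ((Pb - Pa) * (Qd - Qc)) = (\<Sum>i\<in>{a<..b}. \<Sum>j\<in>{c<..d}. p i * q j * u i j)"
    using pos unfolding block_mean_def Pa_def Pb_def Qc_def Qd_def by simp
  then have "(block_mean p q u a b c d - l) * ((Pb - Pa) * (Qd - Qc))
      = Pb * Qd * (wmean p q u b d - l) - Pa * Qd * (wmean p q u a d - l)
        - Pb * Qc * (wmean p q u b c - l) + Pa * Qc * (wmean p q u a c - l)"
    using block_sum_eq_wmean[of p q, OF assms(1,2) less_imp_le[OF assms(3)] less_imp_le[OF assms(4)]]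
    unfolding Pa_def Pb_def Qc_def Qd_def by (simp add: algebra_simps)
  also have "\<bar>\<dots>\<bar> \<le> Pb * Qd * \<delta> + Pa * Qd * \<delta> + Pb * Qc * \<delta> + Pa * Qc * \<delta>"
    using pos assms(5)
    by (intro abs_triangle_ineq4[THEN order_trans] abs_triangle_ineq[THEN order_trans] add_mono)
      (auto simp: abs_mult intro!: mult_left_mono)
  also have "\<dots> = \<delta> * (Pb + Pa) * (Qd + Qc)"
    by (simp add: algebra_simps)
  finally have "\<bar>block_mean p q u a b c d - l\<bar> * ((Pb - Pa) * (Qd - Qc)) \<le> \<delta> * (Pb + Pa) * (Qd + Qc)"
    by (simp only: abs_mult abs_of_pos[OF pos(5)] abs_of_pos[OF pos(6)])
  moreover have "\<delta> * ((Pb + Pa) / (Pb - Pa)) * ((Qd + Qc) / (Qd - Qc))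
      = \<delta> * (Pb + Pa) * (Qd + Qc) / ((Pb - Pa) * (Qd - Qc))"
    by simp
  ultimately show ?thesis
    using pos unfolding Pa_def Pb_def Qc_def Qd_def by (simp add: pos_le_divide_eq)
qed

lemma sum_ratio_le:
  fixes x y \<mu> :: real
  assumes "0 < x" "1 < \<mu>" "\<mu> * x \<le> y" "y \<le> \<mu>\<^sup>2 * x"
  shows "(y + x) / (y - x) \<le> (\<mu>\<^sup>2 + 1) / (\<mu> - 1)"
proof -
  have "0 < (\<mu> - 1) * x" "(\<mu> - 1) * x \<le> y - x" "y + x \<le> (\<mu>\<^sup>2 + 1) * x"
    using assms by (simp_all add: algebra_simps)
  then have "(y + x) / (y - x) \<le> ((\<mu>\<^sup>2 + 1) * x) / ((\<mu> - 1) * x)"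
    using assms(1) by (intro frac_le) simp_all
  also have "\<dots> = (\<mu>\<^sup>2 + 1) / (\<mu> - 1)"
    using assms(1) by simp
  finally show ?thesis .
qed

lemma abs_block_mean_diff_le_window:
  assumes "\<And>i. 0 < p i" "\<And>j. 0 < q j" "1 < \<mu>" "0 \<le> \<delta>"
    and "\<mu> * psum p a \<le> psum p b" "psum p b \<le> \<mu>\<^sup>2 * psum p a"
    and "\<mu> * psum q c \<le> psum q d" "psum q d \<le> \<mu>\<^sup>2 * psum q c"
    and "\<And>x y. x \<in> {a, b} \<Longrightarrow> y \<in> {c, d} \<Longrightarrow> \<bar>wmean p q u x y - l\<bar> \<le> \<delta>"
  shows "\<bar>block_mean p q u a b c d - l\<bar> \<le> \<delta> * ((\<mu>\<^sup>2 + 1) / (\<mu> - 1))\<^sup>2"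
proof -
  have "psum p a < psum p b" "psum q c < psum q d"
    using assms(3,5,7) psum_pos[of p, OF assms(1)] psum_pos[of q, OF assms(2)] 
    by (smt (verit) mult_less_cancel_right1)+
  then have "a < b" "c < d"
    using strict_mono_less[OF strict_mono_psum[of p, OF assms(1)]]
      strict_mono_less[OF strict_mono_psum[of q, OF assms(2)]] by blast+
  have "\<bar>block_mean p q u a b c d - l\<bar>
      \<le> \<delta> * ((psum p b + psum p a) / (psum p b - psum p a)) * ((psum q d + psum q c) / (psum q d - psum q c))"
    using abs_block_mean_diff_le[OF assms(1,2) \<open>a < b\<close> \<open>c < d\<close> assms(9)] .
  also have "\<dots> \<le> \<delta> * ((\<mu>\<^sup>2 + 1) / (\<mu> - 1)) * ((\<mu>\<^sup>2 + 1) / (\<mu> - 1))"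
  proof (intro mult_mono sum_ratio_le)
    show "0 \<le> (psum p b + psum p a) / (psum p b - psum p a)"
      using psum_pos[of p, OF assms(1)] \<open>psum p a < psum p b\<close>
      by (intro divide_nonneg_pos add_nonneg_nonneg) (auto intro: less_imp_le)
    show "0 \<le> (psum q d + psum q c) / (psum q d - psum q c)"
      using psum_pos[of q, OF assms(2)] \<open>psum q c < psum q d\<close>
      by (intro divide_nonneg_pos add_nonneg_nonneg) (auto intro: less_imp_le)
  qed (use psum_pos[of p, OF assms(1)] psum_pos[of q, OF assms(2)] assms(3-8) in auto)
  finally show ?thesis
    by (simp add: power2_eq_square mult.assoc)
qed

locale Nbar_tauberian =
  fixes p q :: "nat \<Rightarrow> real" and u :: "nat \<Rightarrow> nat \<Rightarrow> real" and l :: real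
  assumes p_pos: "\<And>i. 0 < p i" and q_pos: "\<And>j. 0 < q j"
    and P: "regular_growth (psum p)" and Q: "regular_growth (psum q)"
    and summable: "Nbar_summable p q u l"
    and box: "slowly_decreasing_box (psum p) (psum q) u"
begin

lemma choose_tolerances:
  assumes "0 < e"
  obtains \<mu> \<delta> N where "1 < \<mu>" "0 \<le> \<delta>" "\<delta> * ((\<mu>\<^sup>2 + 1) / (\<mu> - 1))\<^sup>2 \<le> e"
    and "\<And>m n i j. N \<le> m \<Longrightarrow> N \<le> n \<Longrightarrow> psum p m \<le> psum p i \<Longrightarrow> psum p i \<le> \<mu>\<^sup>2 * psum p m
      \<Longrightarrow> psum q n \<le> psum q j \<Longrightarrow> psum q j \<le> \<mu>\<^sup>2 * psum q n \<Longrightarrow> u m n - e \<le> u i j"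
    and "\<And>x y. N \<le> x \<Longrightarrow> N \<le> y \<Longrightarrow> \<bar>wmean p q u x y - l\<bar> \<le> \<delta>"
proof -
  obtain lam N1 where lam: "1 < lam" and N1: "\<forall>m\<ge>N1. \<forall>n\<ge>N1. \<forall>i j. psum p m \<le> psum p i
      \<longrightarrow> psum p i \<le> lam * psum p m \<longrightarrow> psum q n \<le> psum q j \<longrightarrow> psum q j \<le> lam * psum q n
      \<longrightarrow> u m n - e \<le> u i j"
    using box assms unfolding slowly_decreasing_box_def by blast
  define \<mu> where "\<mu> = sqrt lam"
  have "1 < \<mu>" "\<mu>\<^sup>2 = lam"
    using lam by (simp_all add: \<mu>_def)
  define R where "R = ((\<mu>\<^sup>2 + 1) / (\<mu> - 1))\<^sup>2"
  have "0 < \<mu>\<^sup>2 + 1"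
    by (intro add_nonneg_pos) simp_all
  then have "0 < R"
    using \<open>1 < \<mu>\<close> by (simp add: R_def)
  define \<delta> where "\<delta> = e / R"
  have "0 < \<delta>" "\<delta> * R = e"
    using \<open>0 < R\<close> assms by (simp_all add: \<delta>_def)
  then obtain N0 where N0: "\<And>x y. N0 \<le> x \<Longrightarrow> N0 \<le> y \<Longrightarrow> \<bar>wmean p q u x y - l\<bar> < \<delta>"
    using summable unfolding Nbar_summable_def P_convergent_def by blast
  show ?thesis
  proof (rule that[of \<mu> \<delta> "max N1 N0"])
    show "1 < \<mu>" "0 \<le> \<delta>" "\<delta> * ((\<mu>\<^sup>2 + 1) / (\<mu> - 1))\<^sup>2 \<le> e"
      using \<open>1 < \<mu>\<close> \<open>0 < \<delta>\<close> \<open>\<delta> * R = e\<close> by (simp_all add: R_def)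
  qed (use N0 N1 \<open>\<mu>\<^sup>2 = lam\<close> in \<open>fastforce+\<close>)
qed

lemma eventually_le_limit_plus:
  assumes "0 < e"
  shows "\<exists>n0. \<forall>m\<ge>n0. \<forall>n\<ge>n0. u m n \<le> l + 2 * e"
proof -
  obtain \<mu> \<delta> N where \<mu>: "1 < \<mu>" and \<delta>: "0 \<le> \<delta>" "\<delta> * ((\<mu>\<^sup>2 + 1) / (\<mu> - 1))\<^sup>2 \<le> e"
    and slow: "\<And>m n i j. N \<le> m \<Longrightarrow> N \<le> n \<Longrightarrow> psum p m \<le> psum p i \<Longrightarrow> psum p i \<le> \<mu>\<^sup>2 * psum p m
      \<Longrightarrow> psum q n \<le> psum q j \<Longrightarrow> psum q j \<le> \<mu>\<^sup>2 * psum q n \<Longrightarrow> u m n - e \<le> u i j"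
    and close: "\<And>x y. N \<le> x \<Longrightarrow> N \<le> y \<Longrightarrow> \<bar>wmean p q u x y - l\<bar> \<le> \<delta>"
    using choose_tolerances[OF assms] by blast
  have "\<forall>\<^sub>F m in sequentially. N \<le> m \<and> (\<exists>a>m. \<mu> * psum p m \<le> psum p a \<and> psum p a \<le> \<mu>\<^sup>2 * psum p m)
      \<and> (\<exists>c>m. \<mu> * psum q m \<le> psum q c \<and> psum q c \<le> \<mu>\<^sup>2 * psum q m)"
    using regular_growth.eventually_index_above[OF P \<mu>] regular_growth.eventually_index_above[OF Q \<mu>]
    by (intro eventually_conj eventually_ge_at_top)
  then obtain n0 where n0: "\<And>m. n0 \<le> m \<Longrightarrow> N \<le> m \<and> (\<exists>a>m. \<mu> * psum p m \<le> psum p a \<and> psum p a \<le> \<mu>\<^sup>2 * psum p m)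
      \<and> (\<exists>c>m. \<mu> * psum q m \<le> psum q c \<and> psum q c \<le> \<mu>\<^sup>2 * psum q m)"
    unfolding eventually_sequentially by blast
  have "u m n \<le> l + 2 * e" if m: "n0 \<le> m" and n: "n0 \<le> n" for m n
  proof -
    obtain a c where "N \<le> m" "N \<le> n" "m < a" "n < c"
      and a: "\<mu> * psum p m \<le> psum p a" "psum p a \<le> \<mu>\<^sup>2 * psum p m"
      and c: "\<mu> * psum q n \<le> psum q c" "psum q c \<le> \<mu>\<^sup>2 * psum q n"
      using n0[OF m] n0[OF n] by blast
    have "u m n - e \<le> block_mean p q u m a n c"
    proof (rule block_mean_ge[OF p_pos q_pos \<open>m < a\<close> \<open>n < c\<close>])
      fix i j
      assume "i \<in> {m<..a}" "j \<in> {n<..c}"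
      then have "psum p m \<le> psum p i" "psum p i \<le> psum p a" "psum q n \<le> psum q j" "psum q j \<le> psum q c"
        using monoD[OF regular_growth.mono[OF P]] monoD[OF regular_growth.mono[OF Q]] by auto
      then show "u m n - e \<le> u i j"
        using slow[OF \<open>N \<le> m\<close> \<open>N \<le> n\<close>] a(2) c(2) by auto
    qed
    moreover have "\<bar>block_mean p q u m a n c - l\<bar> \<le> e"
      using abs_block_mean_diff_le_window[OF p_pos q_pos \<mu> \<delta>(1) a c, of u l] close \<delta>(2)
        \<open>N \<le> m\<close> \<open>N \<le> n\<close> \<open>m < a\<close> \<open>n < c\<close> by fastforce
    ultimately show ?thesis
      by (simp add: abs_le_iff)
  qed
  then show ?thesis
    by blast
qed

lemma eventually_ge_limit_minus:
  assumes "0 < e"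
  shows "\<exists>n0. \<forall>m\<ge>n0. \<forall>n\<ge>n0. l - 2 * e \<le> u m n"
proof -
  obtain \<mu> \<delta> N where \<mu>: "1 < \<mu>" and \<delta>: "0 \<le> \<delta>" "\<delta> * ((\<mu>\<^sup>2 + 1) / (\<mu> - 1))\<^sup>2 \<le> e"
    and slow: "\<And>m n i j. N \<le> m \<Longrightarrow> N \<le> n \<Longrightarrow> psum p m \<le> psum p i \<Longrightarrow> psum p i \<le> \<mu>\<^sup>2 * psum p m
      \<Longrightarrow> psum q n \<le> psum q j \<Longrightarrow> psum q j \<le> \<mu>\<^sup>2 * psum q n \<Longrightarrow> u m n - e \<le> u i j"
    and close: "\<And>x y. N \<le> x \<Longrightarrow> N \<le> y \<Longrightarrow> \<bar>wmean p q u x y - l\<bar> \<le> \<delta>"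
    using choose_tolerances[OF assms] by blast
  have "\<forall>\<^sub>F m in sequentially. (\<exists>a\<ge>N. a < m \<and> \<mu> * psum p a \<le> psum p m \<and> psum p m \<le> \<mu>\<^sup>2 * psum p a)
      \<and> (\<exists>c\<ge>N. c < m \<and> \<mu> * psum q c \<le> psum q m \<and> psum q m \<le> \<mu>\<^sup>2 * psum q c)"
    using regular_growth.eventually_index_below[OF P \<mu>] regular_growth.eventually_index_below[OF Q \<mu>]
    by (rule eventually_conj)
  then obtain n0 where n0: "\<And>m. n0 \<le> m \<Longrightarrow>
      (\<exists>a\<ge>N. a < m \<and> \<mu> * psum p a \<le> psum p m \<and> psum p m \<le> \<mu>\<^sup>2 * psum p a)
      \<and> (\<exists>c\<ge>N. c < m \<and> \<mu> * psum q c \<le> psum q m \<and> psum q m \<le> \<mu>\<^sup>2 * psum q c)"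
    unfolding eventually_sequentially by blast
  have "l - 2 * e \<le> u m n" if m: "n0 \<le> m" and n: "n0 \<le> n" for m n
  proof -
    obtain a c where "N \<le> a" "N \<le> c" "a < m" "c < n"
      and a: "\<mu> * psum p a \<le> psum p m" "psum p m \<le> \<mu>\<^sup>2 * psum p a"
      and c: "\<mu> * psum q c \<le> psum q n" "psum q n \<le> \<mu>\<^sup>2 * psum q c"
      using n0[OF m] n0[OF n] by blast
    have "block_mean p q u a m c n \<le> u m n + e"
    proof (rule block_mean_le[OF p_pos q_pos \<open>a < m\<close> \<open>c < n\<close>])
      fix i j
      assume "i \<in> {a<..m}" "j \<in> {c<..n}"
      then have "psum p i \<le> psum p m" "psum p a \<le> psum p i" "psum q j \<le> psum q n" "psum q c \<le> psum q j"
        using monoD[OF regular_growth.mono[OF P]] monoD[OF regular_growth.mono[OF Q]] by auto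
      moreover have "0 < \<mu>\<^sup>2"
        using \<mu> by simp
      ultimately have "psum p m \<le> \<mu>\<^sup>2 * psum p i" "psum q n \<le> \<mu>\<^sup>2 * psum q j"
        using a(2) c(2) by (smt (verit) mult_left_mono)+
      moreover have "N \<le> i" "N \<le> j"
        using \<open>N \<le> a\<close> \<open>N \<le> c\<close> \<open>i \<in> {a<..m}\<close> \<open>j \<in> {c<..n}\<close> by auto
      ultimately show "u i j \<le> u m n + e"
        using slow[of i j m n] \<open>psum p i \<le> psum p m\<close> \<open>psum q j \<le> psum q n\<close> by fastforce
    qed
    moreover have "\<bar>block_mean p q u a m c n - l\<bar> \<le> e"
      using abs_block_mean_diff_le_window[OF p_pos q_pos \<mu> \<delta>(1) a c, of u l] close \<delta>(2)
        \<open>N \<le> a\<close> \<open>N \<le> c\<close> \<open>a < m\<close> \<open>c < n\<close> by fastforce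
    ultimately show ?thesis
      by (simp add: abs_le_iff)
  qed
  then show ?thesis
    by blast
qed

theorem P_convergent: "P_convergent u l"
  unfolding P_convergent_def
proof (intro allI impI)
  fix \<epsilon> :: real
  assume "0 < \<epsilon>"
  then have "0 < \<epsilon> / 3"
    by simp
  obtain n1 where n1: "\<forall>m\<ge>n1. \<forall>n\<ge>n1. u m n \<le> l + 2 * (\<epsilon> / 3)"
    using eventually_le_limit_plus[OF \<open>0 < \<epsilon> / 3\<close>] by blast
  obtain n2 where n2: "\<forall>m\<ge>n2. \<forall>n\<ge>n2. l - 2 * (\<epsilon> / 3) \<le> u m n"
    using eventually_ge_limit_minus[OF \<open>0 < \<epsilon> / 3\<close>] by blast
  have "\<bar>u m n - l\<bar> < \<epsilon>" if "max n1 n2 \<le> m" "max n1 n2 \<le> n" for m n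
    using n1[rule_format, of m n] n2[rule_format, of m n] that \<open>0 < \<epsilon>\<close> by (simp add: abs_less_iff)
  then show "\<exists>n0. \<forall>m n. n0 \<le> m \<and> n0 \<le> n \<longrightarrow> \<bar>u m n - l\<bar> < \<epsilon>"
    by blast
qed

end

theorem theorem4p1:
  fixes p q :: "nat \<Rightarrow> real" and u :: "nat \<Rightarrow> nat \<Rightarrow> real" and l \<alpha> :: real
  assumes "\<alpha> \<ge> 0"
    and "SVA_reg \<alpha> p" and "SVA_reg \<alpha> q"
    and "filterlim (psum p) at_top sequentially"
    and "filterlim (psum q) at_top sequentially"
    and "Nbar_summable p q u l"
    and "slow_dec_P p u" and "slow_dec_Q q u"
    and "slow_dec_P_strong p q u \<or> slow_dec_Q_strong p q u"
  shows "P_convergent u l"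
proof -
  have p: "\<And>i. 0 < p i" and q: "\<And>j. 0 < q j"
    using assms(2,3) unfolding SVA_reg_def by auto
  have "Nbar_tauberian p q u l"
  proof (rule Nbar_tauberian.intro)
    show "regular_growth (psum p)"
      using regular_growth_psum[OF p assms(4) SVA_reg_ratio_succ[OF assms(2)]] .
    show "regular_growth (psum q)"
      using regular_growth_psum[OF q assms(5) SVA_reg_ratio_succ[OF assms(3)]] .
    show "slowly_decreasing_box (psum p) (psum q) u"
      using slowly_decreasing_box_if_slow_dec[OF p q assms(7,8)] .
  qed (use p q assms(6) in auto)
  then show ?thesis
    by (rule Nbar_tauberian.P_convergent)
qed

end
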